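(* For any $1\le s\le t$, the elements of $P(t,s)=P(t)P(t-1)\cdots P(s)$ are CD-rationals over $O((t-s+1)n\log n)$ bits, and every nonzero element of $P(t,s)$ is at least $n^{-O(n^2)}$.
   Context: For each $t\ge1$, $G_t$ is an undirected graph without self-loops on $\{1,\dots,n\}$ with degrees $d_i(t)$ and Laplacian $L_t$; $C_t=\mathrm{diag}(c_1(t),\dots,c_n(t))$ where each $c_i(t)$ is a rational encoded over $O(\log n)$ bits with $0<c_i(t)d_i(t)<1$; and $P(t)=I_n-C_tL_t$. A collection of numbers is a set of CD-rationals over $k$ bits if they can be written as $p_i/q$ with a common denominator $q$, all $p_i$ and $q$ being integers of $O(k)$ bits (the bound stated). $O(\cdot)$ hides absolute constants; $n$ is assumed large. *)

theory Defs
  imports Complex_Main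
begin

text \<open>Vertices are 0..<n (relabelling of 1..n). A time-varying graph is
  E :: nat => nat => nat => bool, with E t i j meaning {i,j} is an edge of G_t.
  Matrices of size n are functions nat => nat => real, read on indices < n.\<close>

definition deg :: "nat \<Rightarrow> (nat \<Rightarrow> nat \<Rightarrow> nat \<Rightarrow> bool) \<Rightarrow> nat \<Rightarrow> nat \<Rightarrow> nat" where
  "deg n E t i = card {j. j < n \<and> E t i j}"

definition is_graph_seq :: "nat \<Rightarrow> (nat \<Rightarrow> nat \<Rightarrow> nat \<Rightarrow> bool) \<Rightarrow> bool" where
  "is_graph_seq n E \<longleftrightarrow> (\<forall>t\<ge>1. \<forall>i<n. \<forall>j<n. (E t i j \<longleftrightarrow> E t j i) \<and> \<not> E t i i)"

definition laplacian :: "nat \<Rightarrow> (nat \<Rightarrow> nat \<Rightarrow> nat \<Rightarrow> bool) \<Rightarrow> nat \<Rightarrow> nat \<Rightarrow> nat \<Rightarrow> real" where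
  "laplacian n E t i j = (if i = j then real (deg n E t i) else if E t i j then -1 else 0)"

definition Pmat :: "nat \<Rightarrow> (nat \<Rightarrow> nat \<Rightarrow> nat \<Rightarrow> bool) \<Rightarrow> (nat \<Rightarrow> nat \<Rightarrow> real) \<Rightarrow> nat \<Rightarrow> nat \<Rightarrow> nat \<Rightarrow> real" where
  "Pmat n E c t i j = (if i = j then 1 else 0) - c t i * laplacian n E t i j"

definition mmul :: "nat \<Rightarrow> (nat \<Rightarrow> nat \<Rightarrow> real) \<Rightarrow> (nat \<Rightarrow> nat \<Rightarrow> real) \<Rightarrow> nat \<Rightarrow> nat \<Rightarrow> real" where
  "mmul n A B i j = (\<Sum>l<n. A i l * B l j)"

text \<open>Pprod n E c s k = P(s+k) P(s+k-1) ... P(s)\<close>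
fun Pprod :: "nat \<Rightarrow> (nat \<Rightarrow> nat \<Rightarrow> nat \<Rightarrow> bool) \<Rightarrow> (nat \<Rightarrow> nat \<Rightarrow> real) \<Rightarrow> nat \<Rightarrow> nat \<Rightarrow> nat \<Rightarrow> nat \<Rightarrow> real" where
  "Pprod n E c s 0 = Pmat n E c s"
| "Pprod n E c s (Suc k) = mmul n (Pmat n E c (s + Suc k)) (Pprod n E c s k)"

definition Pts :: "nat \<Rightarrow> (nat \<Rightarrow> nat \<Rightarrow> nat \<Rightarrow> bool) \<Rightarrow> (nat \<Rightarrow> nat \<Rightarrow> real) \<Rightarrow> nat \<Rightarrow> nat \<Rightarrow> nat \<Rightarrow> nat \<Rightarrow> real" where
  "Pts n E c t s = Pprod n E c s (t - s)"

definition int_bits :: "int \<Rightarrow> real \<Rightarrow> bool" where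
  "int_bits m b \<longleftrightarrow> \<bar>real_of_int m\<bar> < 2 powr b"

definition rat_bits :: "real \<Rightarrow> real \<Rightarrow> bool" where
  "rat_bits x b \<longleftrightarrow> (\<exists>p q. q \<noteq> 0 \<and> int_bits p b \<and> int_bits q b \<and> x = real_of_int p / real_of_int q)"

definition cd_rationals :: "nat \<Rightarrow> (nat \<Rightarrow> nat \<Rightarrow> real) \<Rightarrow> real \<Rightarrow> bool" where
  "cd_rationals n M b \<longleftrightarrow> (\<exists>q::int. \<exists>p::nat \<Rightarrow> nat \<Rightarrow> int. q \<noteq> 0 \<and> int_bits q b \<and>
      (\<forall>i<n. \<forall>j<n. int_bits (p i j) b \<and> M i j = real_of_int (p i j) / real_of_int q))"

end

theory Submission
  imports Defs
begin

text \<open>Each P(t) is a stochastic matrix with positive diagonal and symmetric zero pattern, whose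
  row i has the denominator q_i of c_i(t), so that P(t) has the common denominator
  q_1 \<dots> q_n \<le> n^(K n); multiplying out, P(t, s) has a common denominator of at most
  n^(K n (t - s + 1)), and its numerators are no larger because all entries lie in [0, 1].
  Nonzero entries of P(t) are at least n^-K. For the lower bound follow one column of
  P(t, s) as t grows: its support never shrinks (positive diagonal); a step that does not
  enlarge it leaves the support closed under the symmetric pattern, so each row there is an
  average of entries of the previous column and the bound is kept, while each of the at most
  n enlargements costs a factor n^-K. So nonzero entries are at least n^(-K n).\<close>

definition stochastic :: "nat \<Rightarrow> (nat \<Rightarrow> nat \<Rightarrow> real) \<Rightarrow> bool" where
  "stochastic n A \<longleftrightarrow> (\<forall>i<n. \<forall>j<n. 0 \<le> A i j) \<and> (\<forall>i<n. (\<Sum>j<n. A i j) = 1)"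

definition mvmul :: "nat \<Rightarrow> (nat \<Rightarrow> nat \<Rightarrow> real) \<Rightarrow> (nat \<Rightarrow> real) \<Rightarrow> nat \<Rightarrow> real" where
  "mvmul n A x i = (\<Sum>l<n. A i l * x l)"

definition support :: "nat \<Rightarrow> (nat \<Rightarrow> real) \<Rightarrow> nat set" where
  "support n x = {i. i < n \<and> x i \<noteq> 0}"

definition common_denom :: "nat \<Rightarrow> (nat \<Rightarrow> nat \<Rightarrow> real) \<Rightarrow> int \<Rightarrow> bool" where
  "common_denom n A q \<longleftrightarrow> q \<noteq> 0 \<and> (\<forall>i<n. \<forall>j<n. \<exists>p::int. A i j = of_int p / of_int q)"

lemma mmul_column: "mmul n A B i j = mvmul n A (\<lambda>l. B l j) i"
  by (simp add: mmul_def mvmul_def)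

lemma stochastic_mmul:
  assumes A: "stochastic n A" and B: "stochastic n B"
  shows "stochastic n (mmul n A B)"
  unfolding stochastic_def
proof safe
  fix i j assume "i < n" "j < n"
  then show "0 \<le> mmul n A B i j"
    using A B unfolding stochastic_def mmul_def by (intro sum_nonneg mult_nonneg_nonneg) auto
next
  fix i assume i: "i < n"
  have "(\<Sum>j<n. mmul n A B i j) = (\<Sum>l<n. A i l * (\<Sum>j<n. B l j))"
    unfolding mmul_def sum_distrib_left by (rule sum.swap)
  also have "\<dots> = 1"
    using A B i unfolding stochastic_def by simp
  finally show "(\<Sum>j<n. mmul n A B i j) = 1" .
qed

lemma stochastic_le_1:
  assumes "stochastic n A" "i < n" "j < n"
  shows "A i j \<le> 1"
proof -
  have "A i j \<le> (\<Sum>l<n. A i l)"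
    using assms unfolding stochastic_def by (intro member_le_sum) auto
  with assms show ?thesis unfolding stochastic_def by simp
qed

lemma common_denom_mmul:
  assumes A: "common_denom n A Q" and B: "common_denom n B q"
  shows "common_denom n (mmul n A B) (Q * q)"
proof -
  obtain a where a: "\<And>i l. i < n \<Longrightarrow> l < n \<Longrightarrow> A i l = of_int (a i l) / of_int Q"
    using A unfolding common_denom_def by metis
  obtain b where b: "\<And>l j. l < n \<Longrightarrow> j < n \<Longrightarrow> B l j = of_int (b l j) / of_int q"
    using B unfolding common_denom_def by metis
  have "mmul n A B i j = of_int (\<Sum>l<n. a i l * b l j) / of_int (Q * q)" if "i < n" "j < n" for i j
    using that by (simp add: mmul_def a b sum_divide_distrib)
  then have "\<exists>p::int. mmul n A B i j = of_int p / of_int (Q * q)" if "i < n" "j < n" for i j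
    using that by blast
  with A B show ?thesis unfolding common_denom_def by auto
qed

lemma cd_rationals_if_common_denom:
  assumes A: "stochastic n A" and q: "common_denom n A q" and bits: "int_bits q b"
  shows "cd_rationals n A b"
proof -
  obtain p where p: "\<And>i j. i < n \<Longrightarrow> j < n \<Longrightarrow> A i j = of_int (p i j) / of_int q"
    using q unfolding common_denom_def by metis
  have "int_bits (p i j) b" if "i < n" "j < n" for i j
  proof -
    have A01: "0 \<le> A i j" "A i j \<le> 1"
      using A stochastic_le_1[OF A that] that unfolding stochastic_def by auto
    have "real_of_int (p i j) = A i j * real_of_int q"
      using p[OF that] q unfolding common_denom_def by simp
    then have "\<bar>real_of_int (p i j)\<bar> = A i j * \<bar>real_of_int q\<bar>"
      using A01 by (simp add: abs_mult)
    also have "\<dots> \<le> \<bar>real_of_int q\<bar>"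
      using A01 by (simp add: mult_left_le_one_le)
    finally show ?thesis using bits unfolding int_bits_def by simp
  qed
  with p q bits show ?thesis unfolding cd_rationals_def common_denom_def by blast
qed

lemma mvmul_ge_term:
  assumes P: "\<And>i l. i < n \<Longrightarrow> l < n \<Longrightarrow> 0 \<le> P i l" and x: "\<And>l. l < n \<Longrightarrow> 0 \<le> x l"
    and "i < n" "l < n"
  shows "P i l * x l \<le> mvmul n P x i"
  unfolding mvmul_def using assms by (intro member_le_sum) auto

lemma mvmul_eq_sum_support: "mvmul n P x i = (\<Sum>l\<in>support n x. P i l * x l)"
  unfolding mvmul_def support_def by (rule sum.mono_neutral_right) auto

lemma support_subset_mvmul:
  assumes P: "\<And>i l. i < n \<Longrightarrow> l < n \<Longrightarrow> 0 \<le> P i l" and diag: "\<And>i. i < n \<Longrightarrow> 0 < P i i"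
    and x: "\<And>l. l < n \<Longrightarrow> 0 \<le> x l"
  shows "support n x \<subseteq> support n (mvmul n P x)"
proof
  fix i assume "i \<in> support n x"
  then have i: "i < n" "0 < x i"
    using x unfolding support_def by force+
  then have "0 < P i i * x i"
    using diag by simp
  also have "\<dots> \<le> mvmul n P x i"
    by (rule mvmul_ge_term) (use P x i in auto)
  finally show "i \<in> support n (mvmul n P x)"
    using i unfolding support_def by simp
qed

lemma rowsum_support_if_support_fixed:
  assumes P: "\<And>i l. i < n \<Longrightarrow> l < n \<Longrightarrow> 0 \<le> P i l"
    and sym: "\<And>i l. i < n \<Longrightarrow> l < n \<Longrightarrow> P i l \<noteq> 0 \<Longrightarrow> P l i \<noteq> 0"
    and x: "\<And>l. l < n \<Longrightarrow> 0 \<le> x l"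
    and fixed: "support n (mvmul n P x) = support n x" and i: "i \<in> support n x"
  shows "(\<Sum>l\<in>support n x. P i l) = (\<Sum>l<n. P i l)"
proof -
  have i': "i < n" "0 < x i"
    using i x unfolding support_def by force+
  have "\<forall>l\<in>{..<n} - support n x. P i l = 0"
  proof (rule ccontr)
    assume "\<not> ?thesis"
    then obtain l where l: "l < n" "l \<notin> support n x" "P i l \<noteq> 0"
      by auto
    then have "0 < P l i"
      using sym[OF i'(1) l(1)] P[OF l(1) i'(1)] by simp
    then have "0 < P l i * x i"
      using i' by simp
    also have "\<dots> \<le> mvmul n P x l"
      by (rule mvmul_ge_term) (use P x i' l in auto)
    finally have "l \<in> support n (mvmul n P x)"
      using l unfolding support_def by simp
    with fixed l show False by simp
  qed
  then show ?thesis
    by (intro sum.mono_neutral_left) (auto simp: support_def)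
qed

lemma support_lower_bound_mvmul:
  assumes P: "stochastic n P" and diag: "\<And>i. i < n \<Longrightarrow> 0 < P i i"
    and sym: "\<And>i l. i < n \<Longrightarrow> l < n \<Longrightarrow> P i l \<noteq> 0 \<Longrightarrow> P l i \<noteq> 0"
    and P_ge: "\<And>i l. i < n \<Longrightarrow> l < n \<Longrightarrow> P i l \<noteq> 0 \<Longrightarrow> \<delta> \<le> P i l"
    and \<delta>: "0 < \<delta>"
    and x: "\<And>l. l < n \<Longrightarrow> 0 \<le> x l"
    and x_ge: "\<And>l. l \<in> support n x \<Longrightarrow> \<delta> ^ card (support n x) \<le> x l"
    and i: "i \<in> support n (mvmul n P x)"
  shows "\<delta> ^ card (support n (mvmul n P x)) \<le> mvmul n P x i"
proof -
  let ?S = "support n x" and ?S' = "support n (mvmul n P x)" and ?y = "mvmul n P x i"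
  have P0: "\<And>i l. i < n \<Longrightarrow> l < n \<Longrightarrow> 0 \<le> P i l"
    using P unfolding stochastic_def by blast
  have i': "i < n" "?y \<noteq> 0"
    using i unfolding support_def by auto
  have \<delta>1: "\<delta> \<le> 1"
    using P_ge[OF i'(1) i'(1)] diag[OF i'(1)] stochastic_le_1[OF P i'(1) i'(1)] by simp
  have S_sub: "?S \<subseteq> {..<n}"
    unfolding support_def by auto
  have y_ge: "(\<Sum>l\<in>?S. P i l) * \<delta> ^ card ?S \<le> ?y"
    unfolding mvmul_eq_sum_support sum_distrib_right
    using S_sub P0 i'(1) x_ge by (intro sum_mono mult_left_mono) auto
  show ?thesis
  proof (cases "?S' = ?S")
    case True
    then have "i \<in> ?S"
      using i by simp
    then have "(\<Sum>l\<in>?S. P i l) = 1"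
      using rowsum_support_if_support_fixed[of n P x, OF P0 sym x True] P i'(1)
      unfolding stochastic_def by simp
    with y_ge True show ?thesis by simp
  next
    case False
    then have "?S \<subset> ?S'"
      using support_subset_mvmul[of n P x, OF P0 diag x] by auto
    then have card: "Suc (card ?S) \<le> card ?S'"
      using psubset_card_mono[of ?S' ?S] by (simp add: support_def)
    obtain l where l: "l \<in> ?S" "P i l \<noteq> 0"
    proof (rule ccontr)
      assume "\<not> thesis"
      then have "?y = 0"
        using that unfolding mvmul_eq_sum_support by (intro sum.neutral) auto
      with i'(2) show False ..
    qed
    then have "\<delta> \<le> P i l"
      using P_ge[OF i'(1)] S_sub by auto
    also have "\<dots> \<le> (\<Sum>l\<in>?S. P i l)"
      using l S_sub P0 i'(1) by (intro member_le_sum) (auto simp: support_def)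
    finally have "\<delta> * \<delta> ^ card ?S \<le> (\<Sum>l\<in>?S. P i l) * \<delta> ^ card ?S"
      using \<delta> by (intro mult_right_mono) auto
    then have "\<delta> ^ Suc (card ?S) \<le> ?y"
      using y_ge by simp
    moreover have "\<delta> ^ card ?S' \<le> \<delta> ^ Suc (card ?S)"
      using card \<delta> \<delta>1 by (intro power_decreasing) auto
    ultimately show ?thesis by simp
  qed
qed

lemma common_denom_prod_rows:
  assumes q: "\<And>i. i < n \<Longrightarrow> q i \<noteq> 0"
    and A: "\<And>i l. i < n \<Longrightarrow> l < n \<Longrightarrow> \<exists>a::int. A i l = of_int a / of_int (q i)"
  shows "common_denom n A (\<Prod>i<n. q i)"
proof -
  have "\<exists>a::int. A i l = of_int a / of_int (\<Prod>i<n. q i)" if il: "i < n" "l < n" for i l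
  proof -
    obtain a where a: "A i l = of_int a / of_int (q i)"
      using A[OF il] by blast
    define R where "R = (\<Prod>m\<in>{..<n} - {i}. q m)"
    have "R \<noteq> 0"
      unfolding R_def using q by (subst prod_zero_iff) auto
    moreover have "(\<Prod>i<n. q i) = q i * R"
      unfolding R_def by (rule prod.remove) (use il in auto)
    ultimately have "A i l = of_int (a * R) / of_int (\<Prod>i<n. q i)"
      using a q[OF il(1)] by simp
    then show ?thesis ..
  qed
  moreover have "(\<Prod>i<n. q i) \<noteq> 0"
    using q by (subst prod_zero_iff) auto
  ultimately show ?thesis
    unfolding common_denom_def by blast
qed

lemma frac_ge_powr_neg:
  fixes a q :: int
  assumes x: "x = of_int a / of_int q" "0 < x" and q: "\<bar>real_of_int q\<bar> < 2 powr \<beta>"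
  shows "2 powr - \<beta> \<le> x"
proof -
  have "a \<noteq> 0" "q \<noteq> 0"
    using x by auto
  then have "1 / \<bar>real_of_int q\<bar> \<le> \<bar>real_of_int a\<bar> / \<bar>real_of_int q\<bar>"
    by (intro divide_right_mono) auto
  also have "\<dots> = x"
    using x by (metis abs_divide abs_of_pos)
  finally have "1 / \<bar>real_of_int q\<bar> \<le> x" .
  moreover have "2 powr - \<beta> \<le> 1 / \<bar>real_of_int q\<bar>"
    using q \<open>q \<noteq> 0\<close> by (simp add: powr_minus divide_simps)
  ultimately show ?thesis by simp
qed

lemma laplacian_Ints: "laplacian n E t i l \<in> \<int>"
  unfolding laplacian_def by auto

lemma Pmat_diag: "Pmat n E c t i i = 1 - c t i * real (deg n E t i)"
  unfolding Pmat_def laplacian_def by simp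

lemma Pmat_offdiag: "i \<noteq> l \<Longrightarrow> Pmat n E c t i l = (if E t i l then c t i else 0)"
  unfolding Pmat_def laplacian_def by simp

lemma laplacian_rowsum:
  assumes loopless: "\<not> E t i i" and i: "i < n"
  shows "(\<Sum>l<n. laplacian n E t i l) = 0"
proof -
  have "laplacian n E t i l = of_bool (l = i) * real (deg n E t i) - of_bool (E t i l)" for l
    using loopless by (auto simp: laplacian_def)
  moreover have "{..<n} \<inter> {l. E t i l} = {l. l < n \<and> E t i l}"
    by auto
  ultimately show ?thesis
    using i by (simp add: sum_subtractf deg_def)
qed

lemma Pmat_rowsum:
  assumes loopless: "\<not> E t i i" and i: "i < n"
  shows "(\<Sum>l<n. Pmat n E c t i l) = 1"
proof -
  have "(\<Sum>l<n. Pmat n E c t i l) = (\<Sum>l<n. of_bool (i = l)) - c t i * (\<Sum>l<n. laplacian n E t i l)"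
    unfolding Pmat_def by (simp add: sum_subtractf sum_distrib_left)
  with laplacian_rowsum[of E t i n, OF assms] i show ?thesis
    by simp
qed

context
  fixes n :: nat and E :: "nat \<Rightarrow> nat \<Rightarrow> nat \<Rightarrow> bool" and c :: "nat \<Rightarrow> nat \<Rightarrow> real"
    and \<beta> :: real
  assumes graph: "is_graph_seq n E"
    and weights: "\<forall>t\<ge>1. \<forall>i<n. rat_bits (c t i) \<beta>
      \<and> 0 < c t i * real (deg n E t i) \<and> c t i * real (deg n E t i) < 1"
begin

lemma weight_rat_bits: "1 \<le> t \<Longrightarrow> i < n \<Longrightarrow> rat_bits (c t i) \<beta>"
  using weights by blast

lemma weight_gt_0: "1 \<le> t \<Longrightarrow> i < n \<Longrightarrow> 0 < c t i"
  using weights by (fastforce simp: zero_less_mult_iff)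

lemma Pmat_diag_gt_0: "1 \<le> t \<Longrightarrow> i < n \<Longrightarrow> 0 < Pmat n E c t i i"
  using weights by (simp add: Pmat_diag)

lemma Pmat_stochastic:
  assumes t: "1 \<le> t"
  shows "stochastic n (Pmat n E c t)"
  unfolding stochastic_def
proof safe
  fix i l assume i: "i < n"
  show "0 \<le> Pmat n E c t i l"
  proof (cases "i = l")
    case True
    then show ?thesis
      using Pmat_diag_gt_0[OF t i] by simp
  next
    case False
    then show ?thesis
      using weight_gt_0[OF t i] by (simp add: Pmat_offdiag)
  qed
next
  fix i assume i: "i < n"
  have "\<not> E t i i"
    using graph t i unfolding is_graph_seq_def by blast
  then show "(\<Sum>l<n. Pmat n E c t i l) = 1"
    using i by (rule Pmat_rowsum)
qed


lemma Pmat_nonzero_sym: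
  assumes t: "1 \<le> t" and il: "i < n" "l < n" and nz: "Pmat n E c t i l \<noteq> 0"
  shows "Pmat n E c t l i \<noteq> 0"
proof (cases "i = l")
  case False
  then have "E t i l"
    using nz by (simp add: Pmat_offdiag split: if_splits)
  then have "E t l i"
    using graph t il unfolding is_graph_seq_def by blast
  then show ?thesis
    using False weight_gt_0[OF t il(2)] by (simp add: Pmat_offdiag)
qed (use nz in simp)

lemma Pmat_nonzero_ge:
  assumes t: "1 \<le> t" and il: "i < n" "l < n" and nz: "Pmat n E c t i l \<noteq> 0"
  shows "2 powr - \<beta> \<le> Pmat n E c t i l"
proof -
  obtain p q where q: "q \<noteq> 0" "\<bar>real_of_int q\<bar> < 2 powr \<beta>" and c: "c t i = of_int p / of_int q"
    using weight_rat_bits[OF t il(1)] unfolding rat_bits_def int_bits_def by blast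
  show ?thesis
  proof (cases "i = l")
    case True
    have "Pmat n E c t i l = of_int (q - p * int (deg n E t i)) / of_int q"
      using True c q by (auto simp: Pmat_diag field_simps)
    with True show ?thesis
      using frac_ge_powr_neg Pmat_diag_gt_0[OF t il(1)] q(2) by metis
  next
    case False
    with nz have "Pmat n E c t i l = c t i"
      by (simp add: Pmat_offdiag split: if_splits)
    then show ?thesis
      using weight_gt_0[OF t il(1)] c q by (intro frac_ge_powr_neg) auto
  qed
qed

lemma two_powr_neg_le_1:
  assumes i: "i < n"
  shows "2 powr - \<beta> \<le> 1"
proof -
  have "2 powr - \<beta> \<le> Pmat n E c 1 i i"
    using Pmat_nonzero_ge[of 1 i i] Pmat_diag_gt_0[of 1 i] i by simp
  also have "\<dots> \<le> 1"
    using stochastic_le_1[OF Pmat_stochastic] i by simp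
  finally show ?thesis .
qed

lemma Pmat_common_denom:
  assumes t: "1 \<le> t"
  shows "\<exists>Q. common_denom n (Pmat n E c t) Q \<and> \<bar>real_of_int Q\<bar> \<le> (2 powr \<beta>) ^ n"
proof -
  obtain p q where q: "\<And>i. i < n \<Longrightarrow> q i \<noteq> 0 \<and> \<bar>real_of_int (q i)\<bar> < 2 powr \<beta>"
    and c: "\<And>i. i < n \<Longrightarrow> c t i = of_int (p i) / of_int (q i)"
    using weight_rat_bits[OF t] unfolding rat_bits_def int_bits_def by metis
  have "\<exists>a::int. Pmat n E c t i l = of_int a / of_int (q i)" if "i < n" for i l
  proof -
    obtain m where m: "laplacian n E t i l = of_int m"
      using laplacian_Ints by (blast elim: Ints_cases)
    have "Pmat n E c t i l = of_int (of_bool (i = l) * q i - p i * m) / of_int (q i)"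
      using c[OF that] q[OF that] m by (simp add: Pmat_def field_simps)
    then show ?thesis ..
  qed
  then have "common_denom n (Pmat n E c t) (\<Prod>i<n. q i)"
    using q by (intro common_denom_prod_rows) auto
  moreover have "\<bar>real_of_int (\<Prod>i<n. q i)\<bar> \<le> (\<Prod>i<n. 2 powr \<beta>)"
    unfolding of_int_prod abs_prod using q by (intro prod_mono) (auto simp: less_imp_le)
  ultimately show ?thesis
    by (metis prod_constant card_lessThan)
qed

lemma Pprod_stochastic: "1 \<le> s \<Longrightarrow> stochastic n (Pprod n E c s k)"
  by (induction k) (simp_all add: Pmat_stochastic stochastic_mmul)

lemma Pprod_common_denom:
  assumes s: "1 \<le> s"
  shows "\<exists>q. common_denom n (Pprod n E c s k) q \<and> \<bar>real_of_int q\<bar> \<le> (2 powr \<beta>) ^ (n * Suc k)"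
proof (induction k)
  case 0
  show ?case using Pmat_common_denom[OF s] by simp
next
  case (Suc k)
  then obtain q where q: "common_denom n (Pprod n E c s k) q" "\<bar>real_of_int q\<bar> \<le> (2 powr \<beta>) ^ (n * Suc k)"
    by blast
  obtain Q where Q: "common_denom n (Pmat n E c (s + Suc k)) Q" "\<bar>real_of_int Q\<bar> \<le> (2 powr \<beta>) ^ n"
    using Pmat_common_denom by fastforce
  have "\<bar>real_of_int (Q * q)\<bar> \<le> (2 powr \<beta>) ^ n * (2 powr \<beta>) ^ (n * Suc k)"
    unfolding of_int_mult abs_mult using Q(2) q(2) by (intro mult_mono) auto
  then have "\<bar>real_of_int (Q * q)\<bar> \<le> (2 powr \<beta>) ^ (n * Suc (Suc k))"
    by (simp add: power_add[symmetric])
  with common_denom_mmul[OF Q(1) q(1)] show ?case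
    by auto
qed

lemma Pprod_column_lower_bound:
  assumes s: "1 \<le> s" and j: "j < n"
  shows "i \<in> support n (\<lambda>i. Pprod n E c s k i j) \<Longrightarrow>
    (2 powr - \<beta>) ^ card (support n (\<lambda>i. Pprod n E c s k i j)) \<le> Pprod n E c s k i j"
proof (induction k arbitrary: i)
  case 0
  then have i: "i < n" "Pmat n E c s i j \<noteq> 0"
    by (auto simp: support_def)
  have "1 \<le> card (support n (\<lambda>i. Pmat n E c s i j))"
    using 0 by (auto simp: support_def card_gt_0_iff Suc_le_eq)
  moreover have "2 powr - \<beta> \<le> 1"
    using two_powr_neg_le_1[OF i(1)] .
  ultimately have "(2 powr - \<beta>) ^ card (support n (\<lambda>i. Pmat n E c s i j)) \<le> (2 powr - \<beta>) ^ 1"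
    by (intro power_decreasing) auto
  with Pmat_nonzero_ge[OF s i(1) j i(2)] show ?case
    by simp
next
  case (Suc k)
  let ?P = "Pmat n E c (s + Suc k)"
  have t: "1 \<le> s + Suc k" by simp
  have x: "\<And>l. l < n \<Longrightarrow> 0 \<le> Pprod n E c s k l j"
    using Pprod_stochastic[OF s] j unfolding stochastic_def by blast
  have "(2 powr - \<beta>) ^ card (support n (mvmul n ?P (\<lambda>l. Pprod n E c s k l j)))
      \<le> mvmul n ?P (\<lambda>l. Pprod n E c s k l j) i"
  proof (rule support_lower_bound_mvmul[OF Pmat_stochastic[OF t]])
    show "i \<in> support n (mvmul n ?P (\<lambda>l. Pprod n E c s k l j))"
      using Suc.prems unfolding Pprod.simps mmul_column .
  qed (fact Pmat_diag_gt_0[OF t] Pmat_nonzero_sym[OF t] Pmat_nonzero_ge[OF t] x Suc.IH | simp)+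
  then show ?case
    unfolding Pprod.simps mmul_column .
qed

lemma Pprod_nonzero_ge:
  assumes s: "1 \<le> s" and ij: "i < n" "j < n" and nz: "Pprod n E c s k i j \<noteq> 0"
  shows "(2 powr - \<beta>) ^ n \<le> Pprod n E c s k i j"
proof -
  let ?S = "support n (\<lambda>i. Pprod n E c s k i j)"
  have "card ?S \<le> card {..<n}"
    by (intro card_mono) (auto simp: support_def)
  then have "(2 powr - \<beta>) ^ n \<le> (2 powr - \<beta>) ^ card ?S"
    using two_powr_neg_le_1[OF ij(1)] by (intro power_decreasing) auto
  also have "\<dots> \<le> Pprod n E c s k i j"
    using Pprod_column_lower_bound[OF s ij(2)] ij(1) nz by (simp add: support_def)
  finally show ?thesis .
qed

end

lemma two_powr_log_pow_lt:
  assumes n: "2 \<le> n" and K: "0 < K"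
  shows "(2 powr (K * log 2 n)) ^ (n * Suc k) < 2 powr ((K + 1) * real (Suc k) * real n * log 2 n)"
proof -
  have "0 < real (Suc k) * real n * log 2 n"
    using n by simp
  then have "K * log 2 n * real (n * Suc k) < (K + 1) * real (Suc k) * real n * log 2 n"
    by (simp add: algebra_simps)
  then show ?thesis
    by (simp add: powr_realpow[symmetric] powr_powr)
qed

lemma n_powr_neg_square_le:
  assumes n: "2 \<le> n" and K: "0 < K"
  shows "real n powr (- (K + 1) * real n ^ 2) \<le> (2 powr - (K * log 2 n)) ^ n"
proof -
  have "(2 powr - (K * log 2 n)) ^ n = (2 powr log 2 n) powr (- K * real n)"
    by (simp add: powr_realpow[symmetric] powr_powr mult_ac)
  also have "\<dots> = real n powr (- K * real n)"
    using n by simp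
  finally have eq: "(2 powr - (K * log 2 n)) ^ n = real n powr (- K * real n)" .
  have "K * real n * 1 \<le> (K + 1) * real n * real n"
    using n K by (intro mult_mono) auto
  then have "- (K + 1) * real n ^ 2 \<le> - K * real n"
    by (simp add: power2_eq_square algebra_simps)
  with n show ?thesis
    unfolding eq by (intro powr_mono) auto
qed

lemma Pts_cd_rationals_and_nonzero_ge:
  assumes n: "2 \<le> n" and K: "0 < K" and graph: "is_graph_seq n E"
    and weights: "\<forall>t\<ge>1. \<forall>i<n. rat_bits (c t i) (K * log 2 n)
      \<and> 0 < c t i * real (deg n E t i) \<and> c t i * real (deg n E t i) < 1"
    and s: "1 \<le> s" and st: "s \<le> t"
  shows "cd_rationals n (Pts n E c t s) ((K + 1) * real (t - s + 1) * real n * log 2 n)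
    \<and> (\<forall>i<n. \<forall>j<n. Pts n E c t s i j \<noteq> 0 \<longrightarrow>
         real n powr (- (K + 1) * real n ^ 2) \<le> Pts n E c t s i j)"
proof
  have Pts: "Pts n E c t s = Pprod n E c s (t - s)" "t - s + 1 = Suc (t - s)"
    using st by (simp_all add: Pts_def)
  obtain q where q: "common_denom n (Pprod n E c s (t - s)) q"
    "\<bar>real_of_int q\<bar> \<le> (2 powr (K * log 2 n)) ^ (n * Suc (t - s))"
    using Pprod_common_denom[OF graph weights s] by blast
  have "\<bar>real_of_int q\<bar> < 2 powr ((K + 1) * real (Suc (t - s)) * real n * log 2 n)"
    using q(2) two_powr_log_pow_lt[OF n K] by (rule order_le_less_trans)
  then have "int_bits q ((K + 1) * real (t - s + 1) * real n * log 2 n)"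
    unfolding int_bits_def Pts(2) .
  with q(1) show "cd_rationals n (Pts n E c t s) ((K + 1) * real (t - s + 1) * real n * log 2 n)"
    unfolding Pts(1) by (intro cd_rationals_if_common_denom Pprod_stochastic[OF graph weights s])
  show "\<forall>i<n. \<forall>j<n. Pts n E c t s i j \<noteq> 0 \<longrightarrow> real n powr (- (K + 1) * real n ^ 2) \<le> Pts n E c t s i j"
    unfolding Pts(1)
    using order_trans[OF n_powr_neg_square_le[OF n K] Pprod_nonzero_ge[OF graph weights s]] by blast
qed

theorem lemma3p1:
  "\<forall>K>0. \<exists>C>0. \<exists>N0::nat. \<forall>n\<ge>N0. \<forall>E c.
     is_graph_seq n E \<longrightarrow>
     (\<forall>t\<ge>1. \<forall>i<n. rat_bits (c t i) (K * log 2 n)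
                 \<and> 0 < c t i * real (deg n E t i) \<and> c t i * real (deg n E t i) < 1) \<longrightarrow>
     (\<forall>s t. 1 \<le> s \<and> s \<le> t \<longrightarrow>
        cd_rationals n (Pts n E c t s) (C * real (t - s + 1) * real n * log 2 n)
        \<and> (\<forall>i<n. \<forall>j<n. Pts n E c t s i j \<noteq> 0 \<longrightarrow>
              Pts n E c t s i j \<ge> real n powr (- C * real n ^ 2)))"
  apply (intro allI impI)
  subgoal for K
    using Pts_cd_rationals_and_nonzero_ge[of _ K]
    by (intro exI[of _ "K + 1"] conjI exI[of _ "2::nat"] allI impI) auto
  done

end
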